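(* Let $H\in C^\infty(\mathbb{R}^2)$ be convex and let $U\subset\mathbb{R}^2$ be a domain. For every $v\in C^\infty(U)$, $$2(-\det D^2v)[\det D^2_{pp}H(Dv)]=\operatorname{div}\Big\{D^2_{pp}H(Dv)D[H(Dv)]-\operatorname{div}[D_pH(Dv)]\,D_pH(Dv)\Big\}\quad\text{in }U.$$ *)

theory Defs
  imports "HOL-Analysis.Analysis"
begin

definition pd :: "nat \<Rightarrow> (real \<times> real \<Rightarrow> real) \<Rightarrow> real \<times> real \<Rightarrow> real" where
  "pd i f = (\<lambda>z. if i = 0 then deriv (\<lambda>t. f (t, snd z)) (fst z)
                          else deriv (\<lambda>t. f (fst z, t)) (snd z))"

definition iter_pd :: "nat list \<Rightarrow> (real \<times> real \<Rightarrow> real) \<Rightarrow> real \<times> real \<Rightarrow> real" where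
  "iter_pd is f = foldr pd is f"

definition smooth_on :: "(real \<times> real) set \<Rightarrow> (real \<times> real \<Rightarrow> real) \<Rightarrow> bool" where
  "smooth_on U f \<longleftrightarrow>
     (\<forall>is. continuous_on U (iter_pd is f) \<and>
        (\<forall>z\<in>U. (\<lambda>t. iter_pd is f (t, snd z)) differentiable (at (fst z)) \<and>
                (\<lambda>t. iter_pd is f (fst z, t)) differentiable (at (snd z))))"

end

theory Submission
  imports Defs
begin

(* The identity holds pointwise for every smooth H. Write p = Dv and C = adj(D^2 H) DH, a vector field in the p-variable. Since
   Dp = D^2 v is symmetric and D[H(p)] = Dp DH(p), the Cayley-Hamilton theorem for 2x2 matrices
   turns W = (A Dp - tr(A Dp) I) DH(p), with A = D^2 H(p), into -adj(Dp) C(p). The rows of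
   adj(Dp) are divergence free (Piola identity), so the chain rule gives
   div W = -det(Dp) (div C)(p), and div C = 2 det D^2 H because third derivatives of H commute. *)

lemma iter_pd_pd: "iter_pd is (pd i f) = iter_pd (is @ [i]) f"
  by (simp add: iter_pd_def)

lemma iter_pd_Nil [simp]: "iter_pd [] f = f"
  by (simp add: iter_pd_def)

lemma smooth_on_pd: "smooth_on S f \<Longrightarrow> smooth_on S (pd i f)"
  unfolding smooth_on_def iter_pd_pd by blast

lemma smooth_on_imp_continuous_on: "smooth_on S f \<Longrightarrow> continuous_on S f"
  unfolding smooth_on_def by (metis iter_pd_Nil)

definition coord :: "nat \<Rightarrow> real \<times> real \<Rightarrow> real" where
  "coord j y = (if j = 0 then fst y else snd y)"

definition coord_line :: "nat \<Rightarrow> real \<times> real \<Rightarrow> real \<Rightarrow> real \<times> real" where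
  "coord_line j y t = (if j = 0 then (t, snd y) else (fst y, t))"

definition has_pd :: "nat \<Rightarrow> (real \<times> real \<Rightarrow> real) \<Rightarrow> real \<times> real \<Rightarrow> real \<Rightarrow> bool" where
  "has_pd j f y D \<longleftrightarrow> ((\<lambda>t. f (coord_line j y t)) has_real_derivative D) (at (coord j y))"

lemma coord_line_coord [simp]: "coord_line j y (coord j y) = y"
  by (simp add: coord_line_def coord_def)

lemma pd_eq_deriv: "pd j f y = deriv (\<lambda>t. f (coord_line j y t)) (coord j y)"
  by (simp add: pd_def coord_line_def coord_def)

lemma has_pd_0_iff: "has_pd 0 f y D \<longleftrightarrow> ((\<lambda>s. f (s, snd y)) has_real_derivative D) (at (fst y))"
  by (simp add: has_pd_def coord_line_def coord_def)

lemma has_pd_1_iff: "has_pd 1 f y D \<longleftrightarrow> ((\<lambda>t. f (fst y, t)) has_real_derivative D) (at (snd y))"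
  by (simp add: has_pd_def coord_line_def coord_def)

lemma has_pd_imp_pd_eq: "has_pd j f y D \<Longrightarrow> pd j f y = D"
  unfolding has_pd_def pd_eq_deriv by (rule DERIV_imp_deriv)

lemma smooth_on_has_pd:
  assumes "smooth_on S f" "y \<in> S"
  shows "has_pd j f y (pd j f y)"
proof -
  have "(\<lambda>t. f (t, snd y)) differentiable (at (fst y))"
       "(\<lambda>t. f (fst y, t)) differentiable (at (snd y))"
    using assms unfolding smooth_on_def by (metis iter_pd_Nil)+
  then have "(\<lambda>t. f (coord_line j y t)) differentiable (at (coord j y))"
    by (simp add: coord_line_def coord_def)
  then show ?thesis
    unfolding has_pd_def pd_eq_deriv by (simp add: DERIV_deriv_iff_real_differentiable)
qed

lemma has_pd_diff:
  "has_pd j f y Df \<Longrightarrow> has_pd j g y Dg \<Longrightarrow> has_pd j (\<lambda>z. f z - g z) y (Df - Dg)"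
  unfolding has_pd_def by (auto intro!: derivative_eq_intros)

lemma has_pd_mult:
  "has_pd j f y Df \<Longrightarrow> has_pd j g y Dg \<Longrightarrow> has_pd j (\<lambda>z. f z * g z) y (Df * g y + f y * Dg)"
  unfolding has_pd_def by (auto intro!: derivative_eq_intros)

lemma pd_cong_open:
  assumes "open U" "x \<in> U" "\<And>y. y \<in> U \<Longrightarrow> f y = g y"
  shows "pd j f x = pd j g x"
proof -
  have "continuous_on UNIV (coord_line j x)"
    unfolding coord_line_def by (cases "j = 0") (auto intro!: continuous_intros)
  then have "open (coord_line j x -` U)"
    using assms(1) by (simp add: open_vimage)
  moreover have "coord j x \<in> coord_line j x -` U"
    using assms(2) by simp
  ultimately have "\<forall>\<^sub>F t in nhds (coord j x). f (coord_line j x t) = g (coord_line j x t)"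
    unfolding eventually_nhds using assms(3) by blast
  then show ?thesis
    unfolding pd_eq_deriv by (rule deriv_cong_ev) simp
qed

lemma has_derivative_coord_line: "(coord_line j y has_derivative coord_line j 0) (at t)"
  unfolding coord_line_def by (cases "j = 0") (auto intro!: derivative_eq_intros)

lemma has_derivative_imp_has_pd:
  assumes "(g has_derivative L) (at z)"
  shows "has_pd j g z (L (coord_line j 0 1))"
proof -
  have "(g has_derivative L) (at (coord_line j z (coord j z)))"
    using assms by simp
  from has_derivative_compose[OF has_derivative_coord_line this]
  have "((\<lambda>t. g (coord_line j z t)) has_derivative (\<lambda>h. L (coord_line j 0 h))) (at (coord j z))" .
  moreover have "(\<lambda>h. L (coord_line j 0 h)) = (*) (L (coord_line j 0 1))"
  proof
    fix h
    have "coord_line j 0 h = h *\<^sub>R coord_line j 0 1"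
      by (simp add: coord_line_def)
    then show "L (coord_line j 0 h) = L (coord_line j 0 1) * h"
      using has_derivative_linear[OF assms] by (simp add: linear_scale)
  qed
  ultimately show ?thesis
    unfolding has_pd_def has_field_derivative_def by simp
qed

lemma differentiable_has_derivative_pd:
  assumes "g differentiable (at z)"
  shows "(g has_derivative (\<lambda>h. pd 0 g z * fst h + pd 1 g z * snd h)) (at z)"
proof -
  obtain L where L: "(g has_derivative L) (at z)"
    using assms unfolding differentiable_def by blast
  have "L = (\<lambda>h. pd 0 g z * fst h + pd 1 g z * snd h)"
  proof
    fix h :: "real \<times> real"
    interpret linear L
      using has_derivative_linear[OF L] .
    have "L h = L (fst h *\<^sub>R (1, 0) + snd h *\<^sub>R (0, 1))"
      by (simp add: prod_eq_iff)
    also have "\<dots> = fst h * L (1, 0) + snd h * L (0, 1)"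
      by (simp only: add scale real_scaleR_def)
    finally have "L h = fst h * L (1, 0) + snd h * L (0, 1)" .
    then show "L h = pd 0 g z * fst h + pd 1 g z * snd h"
      using has_pd_imp_pd_eq[OF has_derivative_imp_has_pd[OF L]]
      by (simp add: coord_line_def mult.commute)
  qed
  with L show ?thesis by simp
qed

lemma has_pd_compose:
  assumes g: "g differentiable (at (a y, b y))" and a: "has_pd j a y Da" and b: "has_pd j b y Db"
  shows "has_pd j (\<lambda>z. g (a z, b z)) y (pd 0 g (a y, b y) * Da + pd 1 g (a y, b y) * Db)"
proof -
  have "((\<lambda>t. (a (coord_line j y t), b (coord_line j y t))) has_derivative (\<lambda>h. (Da * h, Db * h)))
      (at (coord j y))"
    using a b unfolding has_pd_def has_field_derivative_def by (intro has_derivative_Pair)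
  moreover have "(g has_derivative (\<lambda>h. pd 0 g (a y, b y) * fst h + pd 1 g (a y, b y) * snd h))
      (at (a (coord_line j y (coord j y)), b (coord_line j y (coord j y))))"
    using differentiable_has_derivative_pd[OF g] by simp
  ultimately have "((\<lambda>t. g (a (coord_line j y t), b (coord_line j y t))) has_derivative
      (\<lambda>h. (pd 0 g (a y, b y) * Da + pd 1 g (a y, b y) * Db) * h)) (at (coord j y))"
    by (auto dest: has_derivative_compose simp: algebra_simps)
  then show ?thesis
    unfolding has_pd_def has_field_derivative_def by simp
qed

lemma pd_compose:
  assumes "g differentiable (at (a y, b y))" "smooth_on U a" "smooth_on U b" "y \<in> U"
  shows "pd j (\<lambda>z. g (a z, b z)) y = pd 0 g (a y, b y) * pd j a y + pd 1 g (a y, b y) * pd j b y"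
  using assms by (intro has_pd_imp_pd_eq has_pd_compose smooth_on_has_pd)

lemma smooth_on_differentiable:
  assumes f: "smooth_on S f" and S: "open S" "z \<in> S"
  shows "f differentiable (at z)"
proof -
  obtain z1 z2 where z: "z = (z1, z2)"
    by fastforce
  obtain X Y' where XY': "open X" "open Y'" "z \<in> X \<times> Y'" "X \<times> Y' \<subseteq> S"
    using open_prod_elim[OF S] .
  then obtain e where e: "e > 0" "ball z2 e \<subseteq> Y'"
    using z by (auto simp: open_contains_ball)
  \<comment> \<open>\<open>has_derivative_partialsI\<close> needs a convex second factor\<close>
  define Y where "Y = ball z2 e"
  have XY: "open (X \<times> Y)" "z \<in> X \<times> Y" "X \<times> Y \<subseteq> S"
    using XY' e z by (auto simp: Y_def open_Times)
  have "((\<lambda>s. f (s, z2)) has_derivative (*) (pd 0 f z)) (at z1 within X)"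
    using smooth_on_has_pd[OF f S(2), of 0] z
    by (simp add: has_pd_def has_field_derivative_def coord_line_def coord_def has_derivative_at_withinI)
  moreover have "((\<lambda>t. f (s, t)) has_derivative blinfun_apply (blinfun_mult_right (pd 1 f (s, t))))
      (at t within Y)" if "s \<in> X" "t \<in> Y" for s t
    using smooth_on_has_pd[OF f, of "(s, t)" 1] XY that
    by (simp add: subset_iff has_pd_def has_field_derivative_def coord_line_def coord_def has_derivative_at_withinI)
  moreover have "continuous (at (z1, z2) within X \<times> Y) (\<lambda>(s, t). blinfun_mult_right (pd 1 f (s, t)))"
  proof -
    have "isCont (pd 1 f) z"
      using smooth_on_imp_continuous_on[OF smooth_on_pd[OF f]] S continuous_on_eq_continuous_at by blast
    then have "isCont (\<lambda>w. blinfun_mult_right (pd 1 f w)) z"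
      by (rule bounded_linear.continuous[OF bounded_linear_blinfun_mult_right])
    then show ?thesis
      unfolding z by (simp add: case_prod_beta' continuous_at_imp_continuous_within)
  qed
  ultimately have "((\<lambda>(s, t). f (s, t)) has_derivative
      (\<lambda>(hs, ht). pd 0 f z * hs + blinfun_mult_right (pd 1 f (z1, z2)) ht)) (at (z1, z2) within X \<times> Y)"
    by (rule has_derivative_partialsI) (auto simp: Y_def e)
  then have "f differentiable (at z within X \<times> Y)"
    unfolding differentiable_def z by auto
  then show ?thesis
    using at_within_open[OF XY(2,1)] by simp
qed

lemma mixed_difference_mean_value:
  fixes f f_s f_st :: "real \<times> real \<Rightarrow> real"
  assumes "h > 0" "k > 0"
    and f_s: "\<And>s t. s \<in> {a..a+h} \<Longrightarrow> t \<in> {b..b+k} \<Longrightarrow>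
      ((\<lambda>s. f (s, t)) has_real_derivative f_s (s, t)) (at s)"
    and f_st: "\<And>s t. s \<in> {a..a+h} \<Longrightarrow> t \<in> {b..b+k} \<Longrightarrow>
      ((\<lambda>t. f_s (s, t)) has_real_derivative f_st (s, t)) (at t)"
  obtains \<xi> \<eta> where "\<xi> \<in> {a..a+h}" "\<eta> \<in> {b..b+k}"
    "f (a+h, b+k) - f (a+h, b) - f (a, b+k) + f (a, b) = h * k * f_st (\<xi>, \<eta>)"
proof -
  have "\<exists>\<xi>. a < \<xi> \<and> \<xi> < a + h \<and>
      (f (a+h, b+k) - f (a+h, b)) - (f (a, b+k) - f (a, b)) = (a + h - a) * (f_s (\<xi>, b+k) - f_s (\<xi>, b))"
  proof (rule MVT2)
    fix s assume "a \<le> s" "s \<le> a + h"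
    then show "((\<lambda>s. f (s, b+k) - f (s, b)) has_real_derivative f_s (s, b+k) - f_s (s, b)) (at s)"
      using assms by (auto intro!: derivative_eq_intros)
  qed (use assms in simp)
  then obtain \<xi> where \<xi>: "a < \<xi>" "\<xi> < a + h"
      "f (a+h, b+k) - f (a+h, b) - f (a, b+k) + f (a, b) = h * (f_s (\<xi>, b+k) - f_s (\<xi>, b))"
    by (auto simp: algebra_simps)
  have "\<exists>\<eta>. b < \<eta> \<and> \<eta> < b + k \<and> f_s (\<xi>, b+k) - f_s (\<xi>, b) = (b + k - b) * f_st (\<xi>, \<eta>)"
    by (rule MVT2) (use assms \<xi> in auto)
  then obtain \<eta> where "b < \<eta>" "\<eta> < b + k" "f_s (\<xi>, b+k) - f_s (\<xi>, b) = k * f_st (\<xi>, \<eta>)"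
    by auto
  with \<xi> show ?thesis
    by (intro that[of \<xi> \<eta>]) auto
qed

lemma smooth_on_mixed_partials_meet:
  assumes f: "smooth_on S f" and "h > 0" and box: "{z1..z1+h} \<times> {z2..z2+h} \<subseteq> S"
  obtains \<xi> \<eta> \<xi>' \<eta>'
  where "(\<xi>, \<eta>) \<in> {z1..z1+h} \<times> {z2..z2+h}" "(\<xi>', \<eta>') \<in> {z1..z1+h} \<times> {z2..z2+h}"
    "pd 1 (pd 0 f) (\<xi>, \<eta>) = pd 0 (pd 1 f) (\<xi>', \<eta>')"
proof -
  have d: "((\<lambda>s. f (s, t)) has_real_derivative pd 0 f (s, t)) (at s)"
    "((\<lambda>t. pd 0 f (s, t)) has_real_derivative pd 1 (pd 0 f) (s, t)) (at t)"
    "((\<lambda>t. f (s, t)) has_real_derivative pd 1 f (s, t)) (at t)"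
    "((\<lambda>s. pd 1 f (s, t)) has_real_derivative pd 0 (pd 1 f) (s, t)) (at s)"
    if "s \<in> {z1..z1+h}" "t \<in> {z2..z2+h}" for s t
    using box that
      has_pd_0_iff[THEN iffD1, OF smooth_on_has_pd[OF f]] has_pd_1_iff[THEN iffD1, OF smooth_on_has_pd[OF f]]
      has_pd_0_iff[THEN iffD1, OF smooth_on_has_pd[OF smooth_on_pd[OF f]]]
      has_pd_1_iff[THEN iffD1, OF smooth_on_has_pd[OF smooth_on_pd[OF f]]]
    by (auto simp: subset_iff)
  obtain \<xi> \<eta> where "\<xi> \<in> {z1..z1+h}" "\<eta> \<in> {z2..z2+h}"
    "f (z1+h, z2+h) - f (z1+h, z2) - f (z1, z2+h) + f (z1, z2) = h * h * pd 1 (pd 0 f) (\<xi>, \<eta>)"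
    by (rule mixed_difference_mean_value[of h h z1 z2 f "pd 0 f" "pd 1 (pd 0 f)"])
      (use \<open>h > 0\<close> d in auto)
  moreover obtain \<eta>' \<xi>' where "\<eta>' \<in> {z2..z2+h}" "\<xi>' \<in> {z1..z1+h}"
    "f (z1+h, z2+h) - f (z1, z2+h) - f (z1+h, z2) + f (z1, z2) = h * h * pd 0 (pd 1 f) (\<xi>', \<eta>')"
    by (rule mixed_difference_mean_value[of h h z2 z1 "\<lambda>(t, s). f (s, t)"
          "\<lambda>(t, s). pd 1 f (s, t)" "\<lambda>(t, s). pd 0 (pd 1 f) (s, t)"])
      (use \<open>h > 0\<close> d in auto)
  ultimately show ?thesis
    using that[of \<xi> \<eta> \<xi>' \<eta>'] \<open>h > 0\<close> by (simp add: algebra_simps)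
qed

lemma smooth_on_pd_commute:
  assumes f: "smooth_on S f" and S: "open S" "z \<in> S"
  shows "pd 1 (pd 0 f) z = pd 0 (pd 1 f) z"
proof -
  define A where "A = pd 1 (pd 0 f)"
  define B where "B = pd 0 (pd 1 f)"
  have "isCont A z" "isCont B z"
    unfolding A_def B_def using S f
    by (metis continuous_on_eq_continuous_at smooth_on_imp_continuous_on smooth_on_pd)+
  have close: "\<bar>A z - B z\<bar> < 2 * e" if "e > 0" for e
  proof -
    have "\<forall>\<^sub>F w in nhds z. w \<in> S \<and> \<bar>A w - A z\<bar> < e \<and> \<bar>B w - B z\<bar> < e"
      using S \<open>isCont A z\<close> \<open>isCont B z\<close> \<open>e > 0\<close>
      by (auto simp: eventually_conj_iff eventually_nhds_in_open isCont_def
          tendsto_at_iff_tendsto_nhds dist_real_def dest!: tendstoD)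
    then obtain d where "d > 0"
      and d: "\<And>w. dist w z < d \<Longrightarrow> w \<in> S \<and> \<bar>A w - A z\<bar> < e \<and> \<bar>B w - B z\<bar> < e"
      unfolding eventually_nhds_metric by (auto simp: dist_commute)
    obtain z1 z2 where z: "z = (z1, z2)"
      by fastforce
    define h where "h = d / 3"
    have box: "(s, t) \<in> S \<and> \<bar>A (s, t) - A z\<bar> < e \<and> \<bar>B (s, t) - B z\<bar> < e"
      if "(s, t) \<in> {z1..z1+h} \<times> {z2..z2+h}" for s t
    proof (rule d)
      have "dist (s, t) z \<le> dist s z1 + dist t z2"
        unfolding z dist_Pair_Pair by (rule sqrt_sum_squares_le_sum_abs[THEN order_trans]) simp
      also have "\<dots> < d"
        using that \<open>d > 0\<close> by (simp add: dist_real_def h_def)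
      finally show "dist (s, t) z < d" .
    qed
    moreover have "h > 0"
      using \<open>d > 0\<close> by (simp add: h_def)
    ultimately obtain \<xi> \<eta> \<xi>' \<eta>' where "(\<xi>, \<eta>) \<in> {z1..z1+h} \<times> {z2..z2+h}"
      "(\<xi>', \<eta>') \<in> {z1..z1+h} \<times> {z2..z2+h}" "A (\<xi>, \<eta>) = B (\<xi>', \<eta>')"
      unfolding A_def B_def using smooth_on_mixed_partials_meet[OF f, of h z1 z2] by blast
    moreover from box[OF this(1)] box[OF this(2)]
    have "\<bar>A (\<xi>, \<eta>) - A z\<bar> < e" "\<bar>B (\<xi>', \<eta>') - B z\<bar> < e"
      by auto
    ultimately show ?thesis
      by linarith
  qed
  show ?thesis
    using close[of "\<bar>A z - B z\<bar> / 2"] by (cases "A z = B z") (auto simp: A_def B_def)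
qed

definition adj_hess_grad :: "(real \<times> real \<Rightarrow> real) \<Rightarrow> nat \<Rightarrow> real \<times> real \<Rightarrow> real" where
  "adj_hess_grad H i =
     (if i = 0 then (\<lambda>p. pd 1 (pd 1 H) p * pd 0 H p - pd 1 (pd 0 H) p * pd 1 H p)
      else (\<lambda>p. pd 0 (pd 0 H) p * pd 1 H p - pd 0 (pd 1 H) p * pd 0 H p))"

lemma differentiable_adj_hess_grad:
  assumes "smooth_on S H" "open S" "p \<in> S"
  shows "adj_hess_grad H i differentiable (at p)"
  unfolding adj_hess_grad_def using assms
  by (auto intro!: differentiable_diff differentiable_mult smooth_on_differentiable smooth_on_pd)

lemma div_adj_hess_grad:
  assumes H: "smooth_on S H" and S: "open S" "p \<in> S"
  shows "pd 0 (adj_hess_grad H 0) p + pd 1 (adj_hess_grad H 1) p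
       = 2 * (pd 0 (pd 0 H) p * pd 1 (pd 1 H) p - pd 1 (pd 0 H) p * pd 0 (pd 1 H) p)"
proof -
  note d1 = smooth_on_has_pd[OF smooth_on_pd[OF H] S(2)]
  note d2 = smooth_on_has_pd[OF smooth_on_pd[OF smooth_on_pd[OF H]] S(2)]
  have "pd 0 (adj_hess_grad H 0) p
      = pd 0 (pd 1 (pd 1 H)) p * pd 0 H p + pd 1 (pd 1 H) p * pd 0 (pd 0 H) p
        - (pd 0 (pd 1 (pd 0 H)) p * pd 1 H p + pd 1 (pd 0 H) p * pd 0 (pd 1 H) p)"
    unfolding adj_hess_grad_def by (auto intro!: has_pd_imp_pd_eq has_pd_diff has_pd_mult d1 d2)
  moreover have "pd 1 (adj_hess_grad H 1) p
      = pd 1 (pd 0 (pd 0 H)) p * pd 1 H p + pd 0 (pd 0 H) p * pd 1 (pd 1 H) p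
        - (pd 1 (pd 0 (pd 1 H)) p * pd 0 H p + pd 0 (pd 1 H) p * pd 1 (pd 0 H) p)"
    unfolding adj_hess_grad_def by (auto intro!: has_pd_imp_pd_eq has_pd_diff has_pd_mult d1 d2)
  moreover have "pd 1 (pd 0 (pd 1 H)) p = pd 0 (pd 1 (pd 1 H)) p"
    and "pd 1 (pd 0 (pd 0 H)) p = pd 0 (pd 1 (pd 0 H)) p"
    using smooth_on_pd_commute[OF smooth_on_pd[OF H] S] by auto
  ultimately show ?thesis
    by (simp add: algebra_simps)
qed

lemma div_adj_jacobian_compose:
  assumes U: "open U" "x \<in> U" and a: "smooth_on U a" and b: "smooth_on U b"
    and c: "\<And>i. c i differentiable (at (a x, b x))"
  shows "pd 0 (\<lambda>y. pd 1 a y * c 1 (a y, b y) - pd 1 b y * c 0 (a y, b y)) x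
       + pd 1 (\<lambda>y. pd 0 b y * c 0 (a y, b y) - pd 0 a y * c 1 (a y, b y)) x
       = - (pd 0 a x * pd 1 b x - pd 1 a x * pd 0 b x) * (pd 0 (c 0) (a x, b x) + pd 1 (c 1) (a x, b x))"
proof -
  note da = smooth_on_has_pd[OF smooth_on_pd[OF a] U(2)]
  note db = smooth_on_has_pd[OF smooth_on_pd[OF b] U(2)]
  have dc: "has_pd k (\<lambda>y. c i (a y, b y)) x
      (pd 0 (c i) (a x, b x) * pd k a x + pd 1 (c i) (a x, b x) * pd k b x)" for i k
    using has_pd_compose[OF c smooth_on_has_pd[OF a U(2)] smooth_on_has_pd[OF b U(2)]] .
  have "pd 0 (\<lambda>y. pd 1 a y * c 1 (a y, b y) - pd 1 b y * c 0 (a y, b y)) x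
      = pd 0 (pd 1 a) x * c 1 (a x, b x)
          + pd 1 a x * (pd 0 (c 1) (a x, b x) * pd 0 a x + pd 1 (c 1) (a x, b x) * pd 0 b x)
        - (pd 0 (pd 1 b) x * c 0 (a x, b x)
          + pd 1 b x * (pd 0 (c 0) (a x, b x) * pd 0 a x + pd 1 (c 0) (a x, b x) * pd 0 b x))"
    by (intro has_pd_imp_pd_eq has_pd_diff has_pd_mult da db dc)
  moreover have "pd 1 (\<lambda>y. pd 0 b y * c 0 (a y, b y) - pd 0 a y * c 1 (a y, b y)) x
      = pd 1 (pd 0 b) x * c 0 (a x, b x)
          + pd 0 b x * (pd 0 (c 0) (a x, b x) * pd 1 a x + pd 1 (c 0) (a x, b x) * pd 1 b x)
        - (pd 1 (pd 0 a) x * c 1 (a x, b x)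
          + pd 0 a x * (pd 0 (c 1) (a x, b x) * pd 1 a x + pd 1 (c 1) (a x, b x) * pd 1 b x))"
    by (intro has_pd_imp_pd_eq has_pd_diff has_pd_mult da db dc)
  moreover have "pd 1 (pd 0 a) x = pd 0 (pd 1 a) x" "pd 1 (pd 0 b) x = pd 0 (pd 1 b) x"
    using smooth_on_pd_commute[OF a U] smooth_on_pd_commute[OF b U] .
  ultimately show ?thesis
    by (simp add: algebra_simps)
qed

(* The paper's field D^2_pp H(Dv) D[H(Dv)] - div[D_p H(Dv)] D_p H(Dv), with Dv replaced by (a, b). *)
definition flux ::
    "(real \<times> real \<Rightarrow> real) \<Rightarrow> (real \<times> real \<Rightarrow> real) \<Rightarrow> (real \<times> real \<Rightarrow> real) \<Rightarrow>
     nat \<Rightarrow> real \<times> real \<Rightarrow> real" where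
  "flux H a b i y =
     (\<Sum>j\<in>{0,1}. pd j (pd i H) (a y, b y) * pd j (\<lambda>z. H (a z, b z)) y)
     - (pd 0 (\<lambda>z. pd 0 H (a z, b z)) y + pd 1 (\<lambda>z. pd 1 H (a z, b z)) y) * pd i H (a y, b y)"

lemma flux_eq_adj_jacobian:
  assumes H: "smooth_on UNIV H" and a: "smooth_on U a" and b: "smooth_on U b"
    and y: "y \<in> U" and curl: "pd 1 a y = pd 0 b y"
  shows "flux H a b 0 y = pd 1 a y * adj_hess_grad H 1 (a y, b y) - pd 1 b y * adj_hess_grad H 0 (a y, b y)"
    and "flux H a b 1 y = pd 0 b y * adj_hess_grad H 0 (a y, b y) - pd 0 a y * adj_hess_grad H 1 (a y, b y)"
  using curl smooth_on_pd[OF H]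
  by (simp_all add: flux_def adj_hess_grad_def algebra_simps
      pd_compose[OF smooth_on_differentiable[OF _ open_UNIV UNIV_I] a b y] H)

theorem lemma2p2:
  fixes H v :: "real \<times> real \<Rightarrow> real" and U :: "(real \<times> real) set"
  assumes "smooth_on UNIV H" and "convex_on UNIV H"
    and "open U" and "connected U"
    and "smooth_on U v"
    and "x \<in> U"
  shows
    "(let Dv = (\<lambda>y. (pd 0 v y, pd 1 v y));
          HDv = (\<lambda>y. H (Dv y));
          HpDv = (\<lambda>i y. pd i H (Dv y));
          HppDv = (\<lambda>i j y. pd j (pd i H) (Dv y));
          divHp = (\<lambda>y. pd 0 (HpDv 0) y + pd 1 (HpDv 1) y);
          W = (\<lambda>i y. (\<Sum>j\<in>{0,1}. HppDv i j y * pd j HDv y) - divHp y * HpDv i y)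
      in 2 * (- (pd 0 (pd 0 v) x * pd 1 (pd 1 v) x - pd 1 (pd 0 v) x * pd 0 (pd 1 v) x))
           * (HppDv 0 0 x * HppDv 1 1 x - HppDv 0 1 x * HppDv 1 0 x)
         = pd 0 (W 0) x + pd 1 (W 1) x)"
proof -
  note H = assms(1) and U = assms(3,6) and v = assms(5)
  define a b where "a = pd 0 v" and "b = pd 1 v"
  have a: "smooth_on U a" and b: "smooth_on U b"
    using smooth_on_pd[OF v] by (simp_all add: a_def b_def)
  have curl: "pd 1 a y = pd 0 b y" if "y \<in> U" for y
    unfolding a_def b_def using smooth_on_pd_commute[OF v U(1) that] .
  have "pd 0 (flux H a b 0) x + pd 1 (flux H a b 1) x
      = pd 0 (\<lambda>y. pd 1 a y * adj_hess_grad H 1 (a y, b y) - pd 1 b y * adj_hess_grad H 0 (a y, b y)) x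
      + pd 1 (\<lambda>y. pd 0 b y * adj_hess_grad H 0 (a y, b y) - pd 0 a y * adj_hess_grad H 1 (a y, b y)) x"
    by (simp only: pd_cong_open[OF U flux_eq_adj_jacobian(1)[OF H a b _ curl]]
        pd_cong_open[OF U flux_eq_adj_jacobian(2)[OF H a b _ curl]])
  also have "\<dots> = - (pd 0 a x * pd 1 b x - pd 1 a x * pd 0 b x)
      * (pd 0 (adj_hess_grad H 0) (a x, b x) + pd 1 (adj_hess_grad H 1) (a x, b x))"
    by (rule div_adj_jacobian_compose[OF U a b differentiable_adj_hess_grad[OF H open_UNIV UNIV_I]])
  also have "\<dots> = 2 * - (pd 0 a x * pd 1 b x - pd 1 a x * pd 0 b x)
      * (pd 0 (pd 0 H) (a x, b x) * pd 1 (pd 1 H) (a x, b x) - pd 1 (pd 0 H) (a x, b x) * pd 0 (pd 1 H) (a x, b x))"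
    by (simp only: div_adj_hess_grad[OF H open_UNIV UNIV_I])
  finally show ?thesis
    unfolding Let_def flux_def[abs_def] a_def b_def by (simp only: mult.assoc)
qed

end
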